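(* Let $G$ be a group and let $A$ and $B$ be torsion-free abelian subgroups of $G$ such that each of $A$ and $B$ has finite index in $G$, is normal in $G$, and is a maximal abelian subgroup of $G$. Then $A=B$.
   Context: A subgroup is maximal abelian if it is abelian and is not properly contained in any abelian subgroup of $G$. *)

theory Defs
  imports "HOL-Algebra.Algebra"
begin

definition abelian_subgroup :: "'a set \<Rightarrow> ('a, 'b) monoid_scheme \<Rightarrow> bool" where
  "abelian_subgroup H G \<longleftrightarrow> subgroup H G \<and>
     (\<forall>x\<in>H. \<forall>y\<in>H. x \<otimes>\<^bsub>G\<^esub> y = y \<otimes>\<^bsub>G\<^esub> x)"

definition maximal_abelian_subgroup :: "'a set \<Rightarrow> ('a, 'b) monoid_scheme \<Rightarrow> bool" where
  "maximal_abelian_subgroup H G \<longleftrightarrow> abelian_subgroup H G \<and>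
     (\<forall>K. abelian_subgroup K G \<and> H \<subseteq> K \<longrightarrow> K = H)"

definition torsion_free_subgroup :: "'a set \<Rightarrow> ('a, 'b) monoid_scheme \<Rightarrow> bool" where
  "torsion_free_subgroup H G \<longleftrightarrow> subgroup H G \<and>
     (\<forall>x\<in>H. \<forall>n::nat. n > 0 \<and> x [^]\<^bsub>G\<^esub> n = \<one>\<^bsub>G\<^esub> \<longrightarrow> x = \<one>\<^bsub>G\<^esub>)"

definition finite_index :: "'a set \<Rightarrow> ('a, 'b) monoid_scheme \<Rightarrow> bool" where
  "finite_index H G \<longleftrightarrow> finite (rcosets\<^bsub>G\<^esub> H)"

end

theory Submission
  imports Defs
begin

text \<open>Let \<open>a \<in> A\<close> and \<open>b \<in> B\<close>. Since \<open>B\<close> has finite index, some power \<open>a\<^sup>k\<close> with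
  \<open>k > 0\<close> lies in \<open>B\<close> and hence commutes with \<open>b\<close>. As \<open>A\<close> is normal, \<open>c = b a b\<inverse>\<close> lies in \<open>A\<close>,
  and \<open>c\<^sup>k = b a\<^sup>k b\<inverse> = a\<^sup>k\<close>. In the torsion-free abelian group \<open>A\<close> this gives \<open>(c a\<inverse>)\<^sup>k = 1\<close>,
  so \<open>c = a\<close>: the elements of \<open>A\<close> and \<open>B\<close> commute. Then \<open>AB\<close> is an abelian subgroup
  containing \<open>A\<close>, so \<open>AB = A\<close> by maximality, i.e. \<open>B \<subseteq> A\<close>; by symmetry \<open>A = B\<close>.\<close>

lemma abelian_subgroupD:
  "abelian_subgroup H G \<Longrightarrow> subgroup H G"
  "abelian_subgroup H G \<Longrightarrow> x \<in> H \<Longrightarrow> y \<in> H \<Longrightarrow> x \<otimes>\<^bsub>G\<^esub> y = y \<otimes>\<^bsub>G\<^esub> x"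
  unfolding abelian_subgroup_def by auto

lemma maximal_abelian_subgroupD:
  "maximal_abelian_subgroup H G \<Longrightarrow> abelian_subgroup H G"
  "maximal_abelian_subgroup H G \<Longrightarrow> abelian_subgroup K G \<Longrightarrow> H \<subseteq> K \<Longrightarrow> K = H"
  unfolding maximal_abelian_subgroup_def by auto

lemma (in group) pow_diff_mem_if_rcos_pow_eq:
  assumes "subgroup H G" "a \<in> carrier G" "i < j" "H #> a [^] i = H #> a [^] j"
  shows "a [^] (j - i :: nat) \<in> H"
proof -
  have "a [^] j \<in> H #> a [^] i"
    using assms by (simp add: repr_independenceD)
  then have "a [^] j \<otimes> inv (a [^] i) \<in> H"
    using assms subgroup.rcos_module_imp[OF _ is_group] by auto
  moreover have "a [^] j = a [^] (j - i) \<otimes> a [^] i"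
    using assms(2,3) nat_pow_mult[OF assms(2), of "j - i" i] by simp
  ultimately show ?thesis
    using assms(2) by (simp add: m_assoc)
qed

text \<open>Pigeonhole on the cosets \<open>H a\<^sup>i\<close>.\<close>

lemma (in group) pow_mem_subgroup_of_finite_index:
  assumes "subgroup H G" "finite (rcosets H)" "a \<in> carrier G"
  shows "\<exists>k > 0. a [^] (k :: nat) \<in> H"
proof -
  define f where "f i = H #> a [^] (i :: nat)" for i
  have "range f \<subseteq> rcosets H"
    unfolding f_def using assms by (auto intro!: rcosetsI subgroup.subset)
  then have "\<not> inj f"
    using assms(2) finite_subset finite_imageD infinite_UNIV_nat by blast
  then obtain i j where "i \<noteq> j" "f i = f j"
    unfolding inj_def by blast
  then consider "i < j" "f i = f j" | "j < i" "f j = f i"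
    by fastforce
  then show ?thesis
    using pow_diff_mem_if_rcos_pow_eq[OF assms(1,3)] unfolding f_def
    by cases (metis zero_less_diff)+
qed

lemma (in group) conjugation_hom:
  assumes "g \<in> carrier G"
  shows "(\<lambda>x. g \<otimes> x \<otimes> inv g) \<in> hom G G"
proof (rule homI)
  fix x y assume "x \<in> carrier G" "y \<in> carrier G"
  with assms show "g \<otimes> (x \<otimes> y) \<otimes> inv g = g \<otimes> x \<otimes> inv g \<otimes> (g \<otimes> y \<otimes> inv g)"
    by (simp add: m_assoc inv_solve_left)
qed (use assms in simp)

lemma (in group) conjugate_nat_pow:
  assumes "g \<in> carrier G" "x \<in> carrier G"
  shows "(g \<otimes> x \<otimes> inv g) [^] (k :: nat) = g \<otimes> x [^] k \<otimes> inv g"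
  using hom_nat_pow[OF conjugation_hom[OF assms(1)] assms(2) is_group is_group] by simp

lemma (in group) torsion_free_abelian_pow_inj:
  assumes "torsion_free_subgroup A G" "abelian_subgroup A G"
    and "x \<in> A" "y \<in> A" "k > 0" "x [^] (k :: nat) = y [^] k"
  shows "x = y"
proof -
  have A: "subgroup A G"
    using assms(2) by (rule abelian_subgroupD)
  have carrier: "x \<in> carrier G" "y \<in> carrier G"
    using assms(3,4) by (auto intro: subgroup.mem_carrier[OF A])
  have mem: "x \<otimes> inv y \<in> A"
    using A assms(3,4) by (simp add: subgroup.m_closed subgroup.m_inv_closed)
  have "(x \<otimes> inv y) [^] k = x [^] k \<otimes> inv y [^] k"
    using pow_mult_distrib abelian_subgroupD(2)[OF assms(2) assms(3) subgroup.m_inv_closed[OF A assms(4)]]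
      carrier by blast
  also have "\<dots> = \<one>"
    using assms(6) carrier by (simp add: nat_pow_inv)
  finally have "x \<otimes> inv y = \<one>"
    using assms(1,5) mem unfolding torsion_free_subgroup_def by (meson conjunct2 bspec)
  then show ?thesis
    using carrier by (metis inv_equality inv_inv l_inv_ex)
qed

lemma (in group) torsion_free_normal_abelian_commutes_with_finite_index_abelian:
  assumes A: "torsion_free_subgroup A G" "abelian_subgroup A G" "A \<lhd> G"
    and B: "abelian_subgroup B G" "finite (rcosets B)"
    and "a \<in> A" "b \<in> B"
  shows "a \<otimes> b = b \<otimes> a"
proof -
  have a: "a \<in> carrier G" and b: "b \<in> carrier G"
    using \<open>a \<in> A\<close> \<open>b \<in> B\<close> abelian_subgroupD(1)[OF A(2)] abelian_subgroupD(1)[OF B(1)]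
    by (auto intro: subgroup.mem_carrier)
  obtain k :: nat where k: "k > 0" "a [^] k \<in> B"
    using pow_mem_subgroup_of_finite_index[OF abelian_subgroupD(1)[OF B(1)] B(2) a] by blast
  have "(b \<otimes> a \<otimes> inv b) [^] k = b \<otimes> a [^] k \<otimes> inv b"
    using conjugate_nat_pow[OF b a] .
  also have "\<dots> = a [^] k"
    using abelian_subgroupD(2)[OF B(1) \<open>b \<in> B\<close> k(2)] a b by (simp add: m_assoc)
  finally have "b \<otimes> a \<otimes> inv b = a"
    using torsion_free_abelian_pow_inj[OF A(1,2)] normal.inv_op_closed2[OF A(3) b \<open>a \<in> A\<close>]
      \<open>a \<in> A\<close> k(1) by blast
  then show ?thesis
    using a b by (metis inv_solve_right m_closed)
qed

lemma (in group) abelian_subgroup_set_mult: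
  assumes "A \<lhd> G" "abelian_subgroup A G" "abelian_subgroup B G"
    and commute: "\<And>a b. a \<in> A \<Longrightarrow> b \<in> B \<Longrightarrow> a \<otimes> b = b \<otimes> a"
  shows "abelian_subgroup (A <#> B) G"
  unfolding abelian_subgroup_def
proof (intro conjI ballI)
  show "subgroup (A <#> B) G"
    using assms(1) abelian_subgroupD(1)[OF assms(3)]
    by (simp add: second_isomorphism_grp.normal_set_mult_subgroup second_isomorphism_grp_axioms_def
        second_isomorphism_grp_def)
  have carrier: "A \<subseteq> carrier G" "B \<subseteq> carrier G"
    using abelian_subgroupD(1)[OF assms(2)] abelian_subgroupD(1)[OF assms(3)] subgroup.subset
    by auto
  fix x y assume "x \<in> A <#> B" "y \<in> A <#> B"
  then obtain a1 b1 a2 b2 where h: "a1 \<in> A" "b1 \<in> B" "a2 \<in> A" "b2 \<in> B"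
    "x = a1 \<otimes> b1" "y = a2 \<otimes> b2" unfolding set_mult_def by blast
  have c: "a1 \<in> carrier G" "b1 \<in> carrier G" "a2 \<in> carrier G" "b2 \<in> carrier G"
    using h(1-4) carrier by auto
  have "x \<otimes> y = a1 \<otimes> (b1 \<otimes> a2) \<otimes> b2" using h c by (simp add: m_assoc)
  also have "\<dots> = a1 \<otimes> (a2 \<otimes> b1) \<otimes> b2" using commute[OF h(3,2)] by simp
  also have "\<dots> = (a1 \<otimes> a2) \<otimes> (b1 \<otimes> b2)" using c by (simp add: m_assoc)
  also have "\<dots> = (a2 \<otimes> a1) \<otimes> (b2 \<otimes> b1)"
    using abelian_subgroupD(2)[OF assms(2) h(1,3)] abelian_subgroupD(2)[OF assms(3) h(2,4)] by simp
  also have "\<dots> = a2 \<otimes> (a1 \<otimes> b2) \<otimes> b1" using c by (simp add: m_assoc)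
  also have "\<dots> = a2 \<otimes> (b2 \<otimes> a1) \<otimes> b1" using commute[OF h(1,4)] by simp
  also have "\<dots> = y \<otimes> x" using h c by (simp add: m_assoc)
  finally show "x \<otimes> y = y \<otimes> x" .
qed

lemma (in group) subset_set_mult:
  assumes "subgroup H G" "subgroup K G"
  shows "H \<subseteq> H <#> K" "K \<subseteq> H <#> K"
proof -
  have "h \<otimes> \<one> \<in> H <#> K" if "h \<in> H" for h
    using that subgroup.one_closed[OF assms(2)] unfolding set_mult_def by blast
  then show "H \<subseteq> H <#> K"
    using subgroup.mem_carrier[OF assms(1)] by auto
  have "\<one> \<otimes> k \<in> H <#> K" if "k \<in> K" for k
    using that subgroup.one_closed[OF assms(1)] unfolding set_mult_def by blast
  then show "K \<subseteq> H <#> K"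
    using subgroup.mem_carrier[OF assms(2)] by auto
qed

lemma (in group) finite_index_abelian_subset_torsion_free_normal_maximal_abelian:
  assumes A: "torsion_free_subgroup A G" "A \<lhd> G" "maximal_abelian_subgroup A G"
    and B: "abelian_subgroup B G" "finite (rcosets B)"
  shows "B \<subseteq> A"
proof -
  have "abelian_subgroup A G"
    using A(3) by (rule maximal_abelian_subgroupD)
  then have "abelian_subgroup (A <#> B) G"
    using abelian_subgroup_set_mult[OF A(2) _ B(1)]
      torsion_free_normal_abelian_commutes_with_finite_index_abelian[OF A(1) _ A(2) B] by blast
  moreover have "A \<subseteq> A <#> B" "B \<subseteq> A <#> B"
    using subset_set_mult[OF normal_imp_subgroup[OF A(2)] abelian_subgroupD(1)[OF B(1)]] by auto
  ultimately show ?thesis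
    using maximal_abelian_subgroupD(2)[OF A(3)] by blast
qed

theorem mainTheorem1:
  fixes G (structure) and A B :: "'a set"
  assumes "group G"
    and "torsion_free_subgroup A G" and "torsion_free_subgroup B G"
    and "finite_index A G" and "finite_index B G"
    and "A \<lhd> G" and "B \<lhd> G"
    and "maximal_abelian_subgroup A G" and "maximal_abelian_subgroup B G"
  shows "A = B"
proof
  show "B \<subseteq> A"
    using group.finite_index_abelian_subset_torsion_free_normal_maximal_abelian[OF assms(1,2,6,8)]
      assms(5,9) maximal_abelian_subgroupD(1) unfolding finite_index_def by blast
  show "A \<subseteq> B"
    using group.finite_index_abelian_subset_torsion_free_normal_maximal_abelian[OF assms(1,3,7,9)]
      assms(4,8) maximal_abelian_subgroupD(1) unfolding finite_index_def by blast
qed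

end
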